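(* Let $a(x),b(x)\in\mathbb{F}_2[x]/\langle x^n-1\rangle$ both have weight at least two. Then the girth $g(G)$ of the Tanner graph associated with the generalized bicycle code defined by $a(x)$ and $b(x)$ satisfies $g(G)\le 8$.
   Context: Weight is the number of nonzero coefficients. The Tanner graph of the GB code defined by $a(x)=\sum a_tx^t$, $b(x)=\sum b_tx^t$ is the bipartite graph with $n$ check nodes $x_0,\dots,x_{n-1}$ (X-checks) and $2n$ qubit nodes $q_0,\dots,q_{n-1},q'_0,\dots,q'_{n-1}$, where $x_t$ is adjacent to $q_c$ iff $a_{t-c}=1$ and to $q'_c$ iff $b_{t-c}=1$ (indices mod $n$). The girth is the length of a shortest cycle. *)

theory Defs
  imports Main "HOL-Library.Extended_Nat"
begin

text \<open>An element of F2[x]/(x^n - 1) is represented by its coefficient vector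
  a :: nat => bool, where a t (for t < n) is the coefficient of x^t
  (True = 1, False = 0); values at t >= n are irrelevant.\<close>

definition weight :: "nat \<Rightarrow> (nat \<Rightarrow> bool) \<Rightarrow> nat" where
  "weight n a = card {t. t < n \<and> a t}"

datatype node = Chk nat | Qb nat | Qb' nat

definition tanner_nodes :: "nat \<Rightarrow> node set" where
  "tanner_nodes n = Chk ` {..<n} \<union> Qb ` {..<n} \<union> Qb' ` {..<n}"

fun tanner_adj0 :: "nat \<Rightarrow> (nat \<Rightarrow> bool) \<Rightarrow> (nat \<Rightarrow> bool) \<Rightarrow> node \<Rightarrow> node \<Rightarrow> bool" where
  "tanner_adj0 n a b (Chk t) (Qb c) = a ((t + n - c) mod n)"
| "tanner_adj0 n a b (Chk t) (Qb' c) = b ((t + n - c) mod n)"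
| "tanner_adj0 n a b _ _ = False"

definition tanner_adj :: "nat \<Rightarrow> (nat \<Rightarrow> bool) \<Rightarrow> (nat \<Rightarrow> bool) \<Rightarrow> node \<Rightarrow> node \<Rightarrow> bool" where
  "tanner_adj n a b u v \<longleftrightarrow> u \<in> tanner_nodes n \<and> v \<in> tanner_nodes n \<and>
     (tanner_adj0 n a b u v \<or> tanner_adj0 n a b v u)"

definition tanner_cycle :: "nat \<Rightarrow> (nat \<Rightarrow> bool) \<Rightarrow> (nat \<Rightarrow> bool) \<Rightarrow> node list \<Rightarrow> bool" where
  "tanner_cycle n a b vs \<longleftrightarrow> length vs \<ge> 3 \<and> distinct vs \<and>
     (\<forall>i < length vs. tanner_adj n a b (vs ! i) (vs ! ((i + 1) mod length vs)))"

text \<open>Girth: length of a shortest cycle (infinity if there is none).\<close>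
definition tanner_girth :: "nat \<Rightarrow> (nat \<Rightarrow> bool) \<Rightarrow> (nat \<Rightarrow> bool) \<Rightarrow> enat" where
  "tanner_girth n a b = (INF vs \<in> {vs. tanner_cycle n a b vs}. enat (length vs))"

end

theory Submission
  imports Defs
begin

text \<open>Suppose a_i = a_{i+d} = 1 and
  b_k = b_{k+e} = 1 with d, e nonzero mod n. The checks x_0, x_d, x_{d+e}, x_e, joined
  alternately through q-qubits (steps d) and q'-qubits (steps e), form a closed walk of
  length 8, which is a cycle unless d = e or d = -e. If d = e, the checks x_0 and x_d share
  the qubits q_{-i} and q'_{-k}, giving a 4-cycle; d = -e reduces to this by replacing k
  with k + e.\<close>

definition residue :: "nat \<Rightarrow> int \<Rightarrow> nat" where
  "residue n x = nat (x mod int n)"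

lemma residue_less: "0 < n \<Longrightarrow> residue n x < n"
  unfolding residue_def by (simp add: nat_less_iff)

lemma residue_of_nat: "i < n \<Longrightarrow> residue n (int i) = i"
  unfolding residue_def by simp

lemma residue_eq_iff: "0 < n \<Longrightarrow> residue n x = residue n y \<longleftrightarrow> int n dvd x - y"
  unfolding residue_def by (simp add: eq_nat_nat_iff mod_eq_dvd_iff)

lemma dvd_diff_of_nat_less_iff: "i < n \<Longrightarrow> j < n \<Longrightarrow> int n dvd int i - int j \<longleftrightarrow> i = j"
  using residue_eq_iff[of n "int i" "int j"] by (simp add: residue_of_nat)

lemma residue_diff: "0 < n \<Longrightarrow> (residue n s + n - residue n r) mod n = residue n (s - r)"
proof -
  assume n: "0 < n"
  have "int ((residue n s + n - residue n r) mod n)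
      = (int (residue n s) + int n - int (residue n r)) mod int n"
    using residue_less[OF n, of r] by (simp add: zmod_int of_nat_diff)
  also have "\<dots> = (s mod n + n - r mod n) mod n"
    using n by (simp add: residue_def)
  also have "\<dots> = (s - r) mod n"
    by (metis add.commute add_diff_eq mod_add_self2 mod_diff_eq)
  finally show ?thesis
    using n by (simp add: residue_def)
qed

lemma tanner_adj_commute: "tanner_adj n a b u v \<longleftrightarrow> tanner_adj n a b v u"
  unfolding tanner_adj_def by blast

lemma tanner_adj_residue:
  assumes "0 < n"
  shows "tanner_adj n a b (Chk (residue n s)) (Qb (residue n r)) \<longleftrightarrow> a (residue n (s - r))"
    and "tanner_adj n a b (Chk (residue n s)) (Qb' (residue n r)) \<longleftrightarrow> b (residue n (s - r))"
  using residue_less[OF assms] residue_diff[OF assms]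
  by (auto simp: tanner_adj_def tanner_nodes_def)

lemma tanner_cycle_iff:
  "tanner_cycle n a b vs \<longleftrightarrow>
     3 \<le> length vs \<and> distinct vs \<and> list_all2 (tanner_adj n a b) vs (rotate1 vs)"
  by (auto simp: tanner_cycle_def list_all2_conv_all_nth nth_rotate1)

lemma tanner_girth_le_cycle: "tanner_cycle n a b vs \<Longrightarrow> tanner_girth n a b \<le> length vs"
  unfolding tanner_girth_def by (rule INF_lower) simp

lemma tanner_four_cycle:
  fixes i k d :: int
  assumes n: "0 < n"
    and "a (residue n i)" "a (residue n (i + d))" "b (residue n k)" "b (residue n (k + d))"
    and "\<not> int n dvd d"
  shows "tanner_cycle n a b
    [Chk (residue n 0), Qb (residue n (- i)), Chk (residue n d), Qb' (residue n (- k))]"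
  using assms
  by (simp add: tanner_cycle_iff tanner_adj_residue[OF n] residue_eq_iff[OF n] ac_simps
      tanner_adj_commute[of _ _ _ "Qb _"] tanner_adj_commute[of _ _ _ "Qb' _"])

lemma tanner_eight_cycle:
  fixes i k d e :: int
  assumes n: "0 < n"
    and "a (residue n i)" "a (residue n (i + d))" "b (residue n k)" "b (residue n (k + e))"
    and "\<not> int n dvd d" "\<not> int n dvd e" "\<not> int n dvd d - e" "\<not> int n dvd d + e"
  shows "tanner_cycle n a b
    [Chk (residue n 0), Qb (residue n (- i)), Chk (residue n d), Qb' (residue n (d - k)),
     Chk (residue n (d + e)), Qb (residue n (e - i)), Chk (residue n e), Qb' (residue n (- k))]"
  using assms
  by (simp add: tanner_cycle_iff tanner_adj_residue[OF n] residue_eq_iff[OF n] ac_simps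
      tanner_adj_commute[of _ _ _ "Qb _"] tanner_adj_commute[of _ _ _ "Qb' _"])

lemma two_le_weight_obtain:
  assumes "2 \<le> weight n a"
  obtains i j where "i < n" "j < n" "i \<noteq> j" "a i" "a j"
proof -
  have "\<not> card {t. t < n \<and> a t} \<le> 1"
    using assms unfolding weight_def by simp
  then show ?thesis
    using that card_le_Suc0_iff_eq[of "{t. t < n \<and> a t}"] by auto
qed

lemma tanner_girth_le_eight:
  fixes i k d e :: int
  assumes n: "0 < n"
    and a: "a (residue n i)" "a (residue n (i + d))"
    and b: "b (residue n k)" "b (residue n (k + e))"
    and d: "\<not> int n dvd d" and e: "\<not> int n dvd e"
  shows "tanner_girth n a b \<le> 8"
proof -
  note girth_le = order_trans[OF tanner_girth_le_cycle]
  consider "int n dvd d - e" | "int n dvd d + e" | "\<not> int n dvd d - e" "\<not> int n dvd d + e"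
    by blast
  then show ?thesis
  proof cases
    case 1
    then have "residue n (k + d) = residue n (k + e)"
      by (simp add: residue_eq_iff[OF n])
    with b(2) have "b (residue n (k + d))"
      by simp
    from girth_le[OF tanner_four_cycle[OF n a b(1) this d]] show ?thesis
      by (simp add: numeral_eq_enat)
  next
    case 2
    then have "residue n (k + e + d) = residue n k"
      by (simp add: residue_eq_iff[OF n] algebra_simps)
    with b(1) have "b (residue n (k + e + d))"
      by simp
    from girth_le[OF tanner_four_cycle[OF n a b(2) this d]] show ?thesis
      by (simp add: numeral_eq_enat)
  next
    case 3
    from girth_le[OF tanner_eight_cycle[OF n a b d e 3]] show ?thesis
      by (simp add: numeral_eq_enat)
  qed
qed

theorem corollary1:
  fixes n :: nat and a b :: "nat \<Rightarrow> bool"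
  assumes "n \<ge> 1"
    and "weight n a \<ge> 2" and "weight n b \<ge> 2"
  shows "tanner_girth n a b \<le> 8"
proof -
  have n: "0 < n" using assms(1) by simp
  obtain i j where ij: "i < n" "j < n" "i \<noteq> j" "a i" "a j"
    using two_le_weight_obtain[OF assms(2)] .
  obtain k l where kl: "k < n" "l < n" "k \<noteq> l" "b k" "b l"
    using two_le_weight_obtain[OF assms(3)] .
  show ?thesis
    by (rule tanner_girth_le_eight[OF n, of a "int i" "int j - int i" b "int k" "int l - int k"])
      (use ij kl in \<open>simp_all add: residue_of_nat dvd_diff_of_nat_less_iff\<close>)
qed

end
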